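(* Let $(\mathcal A,\mathcal T,(-),\preceq)$ be a $\mathcal T$-system such that $(\mathcal A,\mathcal T,(-))$ is a meta-tangible $\mathcal T$-monoid module triple and $\mathcal A$ has height $2$. Then the system is strongly negated: for all $c,d\in\mathcal A$ with $\mathbb 0\preceq c+d$, either ($\mathbb 0\preceq c$ and $\mathbb 0\preceq d$), or $(-)c\preceq d$, or $(-)d\preceq c$.
   Context: $(\mathcal A,+,\mathbb 0)$ commutative monoid, $\mathcal T\subseteq\mathcal A\setminus\{\mathbb 0\}$. A negation map is $(-):\mathcal A\to\mathcal A$ with $(-)(b_1+b_2)=(-)b_1+(-)b_2$, $(-)((-)b)=b$, $(-)\mathbb 0=\mathbb 0$, $(-)\mathcal T\subseteq\mathcal T$. Write $b(-)c:=b+((-)c)$, $b^\circ:=b(-)b$, $\mathcal A^\circ=\{b^\circ:b\in\mathcal A\}$. A $\mathcal T$-triple $(\mathcal A,\mathcal T,(-))$: such data with an action $\mathcal T\times\mathcal A\to\mathcal A$ satisfying $a(b_1+b_2)=ab_1+ab_2$, $a\mathbb 0=\mathbb 0$, $(-)(ab)=((-)a)b=a((-)b)$, with $\mathcal T\cap\mathcal A^\circ=\emptyset$ and every element of $\mathcal A$ a finite sum of elements of $\mathcal T$. It is a $\mathcal T$-monoid module triple if moreover $\mathcal T$ is a monoid with identity $\mathbb 1$ whose multiplication is the restriction of the action, $\mathbb 1b=b$ and $(a_1a_2)b=a_1(a_2b)$. Meta-tangible: $a+b\in\mathcal T$ for all $a,b\in\mathcal T$ with $b\neq(-)a$. A $\mathcal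 T$-surpassing relation $\preceq$ is a reflexive transitive relation on $\mathcal A$ with: (i) $b\preceq b+c^\circ$ for all $b,c$; (ii) $b_1\preceq b_2\Rightarrow(-)b_1\preceq(-)b_2$; (iii) $b_1\preceq b_2,\ b_1'\preceq b_2'\Rightarrow b_1+b_1'\preceq b_2+b_2'$; (iv) $a\in\mathcal T$, $b_1\preceq b_2\Rightarrow ab_1\preceq ab_2$; (v) $a\preceq b$ with $a,b\in\mathcal T$ implies $a=b$; (vi) $b^\circ\not\preceq a$ for all $b\in\mathcal A$, $a\in\mathcal T$. A $\mathcal T$-system is $(\mathcal A,\mathcal T,(-),\preceq)$ with $(\mathcal A,\mathcal T,(-))$ a $\mathcal T$-triple, $\preceq$ a $\mathcal T$-surpassing relation, and such that $\mathbb 0\preceq a+b$ with $a,b\in\mathcal T$ implies $b=(-)a$. Height of $c$: least $t$ with $c=\sum_{i=1}^ta_i$, $a_i\in\mathcal T$; height of $\mathcal A$: supremum over its elements. *)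

theory Defs
  imports Main "HOL-Library.Extended_Nat"
begin

text \<open>The ambient commutative monoid (A,+,0) is the type 'a (class comm_monoid_add);
  T is a subset, neg the negation map, act the action T x A -> A (only its values
  for first argument in T matter), rel the surpassing relation.\<close>

definition circ :: "('a::comm_monoid_add \<Rightarrow> 'a) \<Rightarrow> 'a \<Rightarrow> 'a" where
  "circ neg b = b + neg b"

definition negation_map :: "'a::comm_monoid_add set \<Rightarrow> ('a \<Rightarrow> 'a) \<Rightarrow> bool" where
  "negation_map T neg \<longleftrightarrow>
     (\<forall>b1 b2. neg (b1 + b2) = neg b1 + neg b2) \<and>
     (\<forall>b. neg (neg b) = b) \<and> neg 0 = 0 \<and> neg ` T \<subseteq> T"

definition T_triple :: "'a::comm_monoid_add set \<Rightarrow> ('a \<Rightarrow> 'a) \<Rightarrow> ('a \<Rightarrow> 'a \<Rightarrow> 'a) \<Rightarrow> bool" where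
  "T_triple T neg act \<longleftrightarrow>
     T \<subseteq> UNIV - {0} \<and> negation_map T neg \<and>
     (\<forall>a\<in>T. \<forall>b1 b2. act a (b1 + b2) = act a b1 + act a b2) \<and>
     (\<forall>a\<in>T. act a 0 = 0) \<and>
     (\<forall>a\<in>T. \<forall>b. neg (act a b) = act (neg a) b \<and> neg (act a b) = act a (neg b)) \<and>
     T \<inter> range (circ neg) = {} \<and>
     (\<forall>c. \<exists>xs. set xs \<subseteq> T \<and> sum_list xs = c)"

definition T_monoid_module_triple ::
  "'a::comm_monoid_add set \<Rightarrow> ('a \<Rightarrow> 'a) \<Rightarrow> ('a \<Rightarrow> 'a \<Rightarrow> 'a) \<Rightarrow> bool" where
  "T_monoid_module_triple T neg act \<longleftrightarrow>
     T_triple T neg act \<and>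
     (\<forall>a1\<in>T. \<forall>a2\<in>T. act a1 a2 \<in> T) \<and>
     (\<exists>one\<in>T. (\<forall>a\<in>T. act a one = a) \<and> (\<forall>b. act one b = b)) \<and>
     (\<forall>a1\<in>T. \<forall>a2\<in>T. \<forall>b. act (act a1 a2) b = act a1 (act a2 b))"

definition meta_tangible :: "'a::comm_monoid_add set \<Rightarrow> ('a \<Rightarrow> 'a) \<Rightarrow> bool" where
  "meta_tangible T neg \<longleftrightarrow> (\<forall>a\<in>T. \<forall>b\<in>T. b \<noteq> neg a \<longrightarrow> a + b \<in> T)"

definition T_surpassing ::
  "'a::comm_monoid_add set \<Rightarrow> ('a \<Rightarrow> 'a) \<Rightarrow> ('a \<Rightarrow> 'a \<Rightarrow> 'a) \<Rightarrow> ('a \<Rightarrow> 'a \<Rightarrow> bool) \<Rightarrow> bool" where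
  "T_surpassing T neg act rel \<longleftrightarrow>
     reflp rel \<and> transp rel \<and>
     (\<forall>b c. rel b (b + circ neg c)) \<and>
     (\<forall>b1 b2. rel b1 b2 \<longrightarrow> rel (neg b1) (neg b2)) \<and>
     (\<forall>b1 b2 b1' b2'. rel b1 b2 \<longrightarrow> rel b1' b2' \<longrightarrow> rel (b1 + b1') (b2 + b2')) \<and>
     (\<forall>a\<in>T. \<forall>b1 b2. rel b1 b2 \<longrightarrow> rel (act a b1) (act a b2)) \<and>
     (\<forall>a\<in>T. \<forall>b\<in>T. rel a b \<longrightarrow> a = b) \<and>
     (\<forall>b. \<forall>a\<in>T. \<not> rel (circ neg b) a)"

definition T_system ::
  "'a::comm_monoid_add set \<Rightarrow> ('a \<Rightarrow> 'a) \<Rightarrow> ('a \<Rightarrow> 'a \<Rightarrow> 'a) \<Rightarrow> ('a \<Rightarrow> 'a \<Rightarrow> bool) \<Rightarrow> bool" where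
  "T_system T neg act rel \<longleftrightarrow>
     T_triple T neg act \<and> T_surpassing T neg act rel \<and>
     (\<forall>a\<in>T. \<forall>b\<in>T. rel 0 (a + b) \<longrightarrow> b = neg a)"

definition elem_height :: "'a::comm_monoid_add set \<Rightarrow> 'a \<Rightarrow> nat" where
  "elem_height T c = (LEAST t. \<exists>xs. length xs = t \<and> set xs \<subseteq> T \<and> sum_list xs = c)"

definition height :: "'a::comm_monoid_add set \<Rightarrow> enat" where
  "height T = (SUP c. enat (elem_height T c))"

definition strongly_negated :: "('a::comm_monoid_add \<Rightarrow> 'a) \<Rightarrow> ('a \<Rightarrow> 'a \<Rightarrow> bool) \<Rightarrow> bool" where
  "strongly_negated neg rel \<longleftrightarrow>
     (\<forall>c d. rel 0 (c + d) \<longrightarrow> (rel 0 c \<and> rel 0 d) \<or> rel (neg c) d \<or> rel (neg d) c)"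

end

theory Submission
  imports Defs
begin

text \<open>By meta-tangibility a sum of two tangible elements is tangible unless it is some a\<degree>,
  so in height 2 every element is \<zero>, tangible, or a\<degree> with a tangible. If \<zero> \<preceq> c + d is
  not of the form tangible + tangible, one summand, say d = b\<degree>, is a quasi-zero, and the
  other one c is either a quasi-zero or tangible. In the latter case c + b\<degree> is not tangible,
  and meta-tangibility forces the absorption law (-)c + b\<degree> = b\<degree>, whence (-)c \<preceq> d.
  The only delicate case of the absorption law is c = (-)c = b, where the negation map turns
  out to be the identity and the action of c on \<one> + \<one> + \<one> = \<one> + \<one> gives c + c\<degree> = c\<degree>.\<close>

lemma sum_list_length_le_height:
  fixes T :: "'a::comm_monoid_add set"
  assumes "height T \<le> enat n" and "set ys \<subseteq> T" and "sum_list ys = c"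
  obtains xs where "length xs \<le> n" "set xs \<subseteq> T" "sum_list xs = c"
proof -
  have "enat (elem_height T c) \<le> height T"
    unfolding height_def by (rule SUP_upper) simp
  with assms(1) have le: "elem_height T c \<le> n"
    by (metis order_trans enat_ord_simps(1))
  have "\<exists>xs. length xs = elem_height T c \<and> set xs \<subseteq> T \<and> sum_list xs = c"
    unfolding elem_height_def by (rule LeastI_ex) (use assms(2,3) in blast)
  then show thesis
    using le that by force
qed

lemma rel_zero_not_tangible:
  assumes "T_surpassing T neg act rel" and "neg 0 = 0" and "a \<in> T"
  shows "\<not> rel 0 a"
  using assms unfolding T_surpassing_def circ_def by (metis add_0)

locale meta_tangible_module_triple =
  fixes T :: "'a::comm_monoid_add set" and neg :: "'a \<Rightarrow> 'a" and act :: "'a \<Rightarrow> 'a \<Rightarrow> 'a"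
  assumes module_triple: "T_monoid_module_triple T neg act"
    and meta_tangible: "meta_tangible T neg"
begin

lemma T_triple: "T_triple T neg act"
  using module_triple unfolding T_monoid_module_triple_def by blast

lemma negation_map: "negation_map T neg"
  using T_triple unfolding T_triple_def by blast

lemma neg_add: "neg (x + y) = neg x + neg y"
  and neg_neg: "neg (neg x) = x"
  and neg_zero: "neg 0 = 0"
  and neg_tangible: "a \<in> T \<Longrightarrow> neg a \<in> T"
  using negation_map unfolding negation_map_def by auto

lemma act_add: "a \<in> T \<Longrightarrow> act a (x + y) = act a x + act a y"
  and act_neg_left: "a \<in> T \<Longrightarrow> act (neg a) x = neg (act a x)"
  and circ_not_tangible: "circ neg x \<notin> T"
  and tangible_generates: "\<exists>xs. set xs \<subseteq> T \<and> sum_list xs = c"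
  using T_triple unfolding T_triple_def by auto

lemma act_tangible: "a \<in> T \<Longrightarrow> b \<in> T \<Longrightarrow> act a b \<in> T"
  using module_triple unfolding T_monoid_module_triple_def by blast

lemma unit_exists: "\<exists>one\<in>T. (\<forall>a\<in>T. act a one = a) \<and> (\<forall>x. act one x = x)"
  using module_triple unfolding T_monoid_module_triple_def by blast

lemma add_tangible_cases:
  assumes "a \<in> T" and "b \<in> T"
  shows "a + b \<in> T \<or> b = neg a"
  using meta_tangible assms unfolding meta_tangible_def by blast

lemma element_cases_height_le_2:
  assumes "height T \<le> 2"
  shows "c = 0 \<or> c \<in> T \<or> (\<exists>a\<in>T. c = circ neg a)"
proof -
  obtain xs where xs: "length xs \<le> 2" "set xs \<subseteq> T" "sum_list xs = c"
    using tangible_generates sum_list_length_le_height[of T 2]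
    by (metis assms numeral_eq_enat)
  then consider "xs = []" | a where "xs = [a]" | a b where "xs = [a, b]"
    by (metis length_0_conv length_Suc_conv le_Suc_eq numeral_2_eq_2 le_zero_eq)
  then show ?thesis
    using xs add_tangible_cases unfolding circ_def by cases auto
qed

lemma neg_eq_id_if_self_negating_tangible:
  assumes "c \<in> T" and "neg c = c"
  shows "neg x = x"
proof -
  obtain one where one: "one \<in> T" "\<And>a. a \<in> T \<Longrightarrow> act a one = a" "\<And>x. act one x = x"
    using unit_exists by blast
  have "act c (one + one) = circ neg c"
    using assms by (simp add: act_add one circ_def)
  then have "one + one \<notin> T"
    using act_tangible[OF assms(1)] circ_not_tangible by metis
  then have "neg one = one"
    using add_tangible_cases[OF one(1) one(1)] by simp
  then show ?thesis
    using act_neg_left[OF one(1), of x] one(3) by simp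
qed

lemma absorb_circ_if_not_neg:
  assumes "a \<in> T" and "b \<in> T" and "b \<noteq> neg a" and "a + circ neg b \<notin> T"
  shows "neg a + circ neg b = circ neg b"
proof -
  have ab: "a + b \<in> T"
    using add_tangible_cases assms(1-3) by blast
  have "(a + b) + neg b \<notin> T"
    using assms(4) by (simp add: circ_def add.assoc)
  then have "neg b = neg (a + b)"
    using add_tangible_cases[OF ab neg_tangible[OF assms(2)]] by blast
  then have "neg b = neg a + neg b"
    by (metis neg_add neg_neg)
  then show ?thesis
    unfolding circ_def by (metis add.assoc add.commute)
qed

text \<open>Here the negation map is the identity, and \<one> + \<one> + \<one> must be some y + y = y\<degree>;
  any y \<noteq> \<one> leads to y = y + y + y = (act y y)\<degree>, contradicting tangibility of y.\<close>

lemma triple_eq_double_if_self_negating: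
  assumes "height T \<le> 2" and "c \<in> T" and "neg c = c" and "c + circ neg c \<notin> T"
  shows "c + circ neg c = circ neg c"
proof -
  have neg_id: "neg x = x" for x
    using neg_eq_id_if_self_negating_tangible[OF assms(2,3)] .
  then have circ_eq: "circ neg x = x + x" for x
    by (simp add: circ_def)
  obtain one where one: "one \<in> T" "\<And>a. a \<in> T \<Longrightarrow> act a one = a" "\<And>x. act one x = x"
    using unit_exists by blast
  define s where "s = one + one + one"
  have act_s: "act a s = a + a + a" if "a \<in> T" for a
    using that by (simp add: s_def act_add one)
  have one_s: "one + s = circ neg (one + one)"
    unfolding s_def circ_eq by (simp add: add_ac)
  have "act c s = c + circ neg c"
    by (simp add: act_s assms(2) circ_eq add.assoc)
  then have "s \<notin> T"
    using act_tangible[OF assms(2)] assms(4) by force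
  moreover have "s \<noteq> 0"
  proof
    assume "s = 0"
    then have "one = circ neg (one + one)"
      using one_s by simp
    then show False
      using one(1) circ_not_tangible by metis
  qed
  ultimately obtain y where y: "y \<in> T" "s = y + y"
    using element_cases_height_le_2[OF assms(1), of s] circ_eq by blast
  have "y = one"
  proof (rule ccontr)
    assume "y \<noteq> one"
    then have one_y: "one + y \<in> T"
      using add_tangible_cases[OF one(1) y(1)] neg_id by force
    have "(one + y) + y = one + s"
      by (simp add: y(2) add.assoc)
    then have "(one + y) + y \<notin> T"
      using one_s circ_not_tangible by simp
    then have "y = one + y"
      using add_tangible_cases[OF one_y y(1)] neg_id by simp
    then have "y = y + s"
      by (simp add: s_def) (metis add.assoc add.commute)
    also have "\<dots> = act y s"
      using act_s[OF y(1)] y(2) by (simp add: add.assoc)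
    also have "\<dots> = circ neg (act y y)"
      by (simp add: y act_add circ_eq)
    finally show False
      using y(1) circ_not_tangible by metis
  qed
  then have "act c s = act c (one + one)"
    using y(2) by simp
  then show ?thesis
    using act_s[OF assms(2)] act_add[OF assms(2)] one(2)[OF assms(2)] circ_eq
    by (simp add: add.assoc)
qed

lemma absorb_circ_if_not_tangible:
  assumes "height T \<le> 2" and "a \<in> T" and "b \<in> T" and "a + circ neg b \<notin> T"
  shows "neg a + circ neg b = circ neg b"
proof (cases "b = neg a")
  case False
  then show ?thesis
    using absorb_circ_if_not_neg assms(2-4) by blast
next
  case True
  then have circ_b: "circ neg b = circ neg a"
    by (simp add: circ_def neg_neg add.commute)
  show ?thesis
  proof (cases "a = neg a")
    case False
    then show ?thesis
      using absorb_circ_if_not_neg[OF assms(2,2)] assms(4) circ_b by simp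
  next
    case True
    then show ?thesis
      using triple_eq_double_if_self_negating[OF assms(1,2)] assms(4) circ_b by simp
  qed
qed

lemma strongly_negated_if_height_le_2:
  assumes system: "T_system T neg act rel" and height: "height T \<le> 2"
  shows "strongly_negated neg rel"
proof -
  have surp: "T_surpassing T neg act rel"
    and sys: "\<And>a b. a \<in> T \<Longrightarrow> b \<in> T \<Longrightarrow> rel 0 (a + b) \<Longrightarrow> b = neg a"
    using system unfolding T_system_def by auto
  have refl: "rel x x" and surp_circ: "rel x (x + circ neg y)" for x y
    using surp unfolding T_surpassing_def reflp_def by auto
  have tangible_circ: "rel (neg a) (circ neg b)"
    if "a \<in> T" "b \<in> T" "rel 0 (a + circ neg b)" for a b
    using that absorb_circ_if_not_tangible[OF height] surp_circ[of "neg a" b]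
      rel_zero_not_tangible[OF surp neg_zero] by metis
  show ?thesis
    unfolding strongly_negated_def
  proof (intro allI impI)
    fix c d
    assume r: "rel 0 (c + d)"
    consider "c = 0 \<or> d = 0" | "c \<in> T" "d \<in> T" | "\<exists>a b. c = circ neg a \<and> d = circ neg b"
      | b where "c \<in> T" "b \<in> T" "d = circ neg b" | b where "d \<in> T" "b \<in> T" "c = circ neg b"
      using element_cases_height_le_2[OF height] by metis
    then show "rel 0 c \<and> rel 0 d \<or> rel (neg c) d \<or> rel (neg d) c"
    proof cases
      case 1
      then show ?thesis using r refl by (auto simp: neg_zero)
    next
      case 2
      then show ?thesis using sys r refl by metis
    next
      case 3
      then show ?thesis using surp_circ[of 0] by auto
    next
      case 4
      then show ?thesis using tangible_circ r by blast
    next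
      case 5
      then show ?thesis using tangible_circ[of d b] r by (simp add: add.commute)
    qed
  qed
qed

end

theorem proposition7p41:
  fixes T :: "'a::comm_monoid_add set" and neg :: "'a \<Rightarrow> 'a"
    and act :: "'a \<Rightarrow> 'a \<Rightarrow> 'a" and rel :: "'a \<Rightarrow> 'a \<Rightarrow> bool"
  assumes "T_system T neg act rel"
    and "T_monoid_module_triple T neg act"
    and "meta_tangible T neg"
    and "height T = 2"
  shows "strongly_negated neg rel"
proof -
  interpret meta_tangible_module_triple T neg act
    using assms(2,3) by unfold_locales
  show ?thesis
    using strongly_negated_if_height_le_2 assms(1,4) by simp
qed

end
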